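(* Let $p,q,r,s,t$ be parameters and let $(a_n)_{n\ge0}$ be defined by $a_0=1$, $a_1=p$, $a_2=q$ and, for $n\ge3$, $$a_n=r\,a_{n-1}+s\,a_{n-2}+t\sum_{k=1}^{n-3}a_ka_{n-k-2}.$$ Then the generating function $\sum_{n\ge0}a_nx^n$ equals $$\left(\frac{1-(r-p)x-(-q+pr+s-t)x^2}{1-rx-(s-2t)x^2},\ \frac{tx^2\bigl(1-(r-p)x-(-q+pr+s-t)x^2\bigr)}{(1-rx-(s-2t)x^2)^2}\right)\cdot c(x),$$ that is, $\frac{1-(r-p)x-(-q+pr+s-t)x^2}{1-rx-(s-2t)x^2}\,c\!\left(\frac{tx^2(1-(r-p)x-(-q+pr+s-t)x^2)}{(1-rx-(s-2t)x^2)^2}\right)$.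
   Context: $c(x)=\frac{1-\sqrt{1-4x}}{2x}$ is the generating function of the Catalan numbers. For power series $g(x)$ with $g(0)\neq0$ and $f(x)$ with $f(0)=0$, the Riordan array $(g,f)$ acts on a power series $h(x)$ by $(g,f)\cdot h(x)=g(x)h(f(x))$. *)

theory Defs
  imports "HOL-Computational_Algebra.Formal_Power_Series"
begin

text \<open>Generating function of the Catalan numbers,
  c(x) = (1 - sqrt(1-4x))/(2x) = sum_n (2n choose n)/(n+1) x^n.\<close>
definition catalan_fps :: "'a::field_char_0 fps" where
  "catalan_fps = Abs_fps (\<lambda>n. of_nat ((2*n) choose n) / of_nat (n+1))"

definition riordan_apply :: "'a::field fps \<Rightarrow> 'a fps \<Rightarrow> 'a fps \<Rightarrow> 'a fps" where
  "riordan_apply g f h = g * (h oo f)"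

end

theory Submission
  imports Defs
begin

text \<open>
  With \<open>D = 1 - r x - (s - 2t) x\<^sup>2\<close> and \<open>N = 1 - (r - p) x - (-q + pr + s - t) x\<^sup>2\<close>,
  the recurrence says exactly that \<open>A = \<Sum> a\<^sub>n x\<^sup>n\<close> solves the quadratic
  \<open>A D = N + t x\<^sup>2 A\<^sup>2\<close>; the correction \<open>-2t\<close> in \<open>D\<close> accounts for the two terms
  \<open>a\<^sub>0 a\<^sub>n\<^sub>-\<^sub>2\<close> missing from the truncated convolution.
  Since \<open>c = 1 + x c\<^sup>2\<close>, the series \<open>(N/D) c(t x\<^sup>2 N / D\<^sup>2)\<close> solves the same
  quadratic, and two solutions \<open>A\<close>, \<open>B\<close> satisfy \<open>(A - B)(D - t x\<^sup>2 (A + B)) = 0\<close>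
  with the second factor invertible, so they coincide.
\<close>

lemma gbinomial_minus_half_times_power:
  "((- (1/2) :: 'a::field_char_0) gchoose n) * (-4) ^ n = of_nat ((2 * n) choose n)"
proof -
  have "((- (1/2) :: 'a) gchoose n) * (-4) ^ n = 4 ^ n * pochhammer (1/2) n / fact n"
    by (simp add: gbinomial_pochhammer power_mult_distrib[symmetric])
  also have "\<dots> = fact (2 * n) / (fact n * fact n)"
    by (simp add: fact_double power_mult)
  also have "\<dots> = of_nat ((2 * n) choose n)"
    by (simp add: binomial_fact mult_2)
  finally show ?thesis .
qed

lemma one_minus_two_X_catalan_fps_eq_binomial:
  "1 - 2 * fps_X * (catalan_fps :: 'a::field_char_0 fps)
     = fps_binomial (1/2) oo (fps_const (-4) * fps_X)"
proof (rule fps_ext)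
  fix n
  show "fps_nth (1 - 2 * fps_X * (catalan_fps :: 'a fps)) n
    = fps_nth (fps_binomial (1/2) oo (fps_const (-4) * fps_X)) n"
  proof (cases n)
    case (Suc m)
    have absorb: "of_nat (Suc m) * ((1/2 :: 'a) gchoose Suc m) = 1/2 * ((- (1/2)) gchoose m)"
      using gbinomial_absorption[of m "1/2 :: 'a"] by simp
    have "fps_nth (fps_binomial (1/2) oo (fps_const (-4) * fps_X)) (Suc m)
        = (-4) ^ Suc m * ((1/2 :: 'a) gchoose Suc m)"
      by (simp only: fps_compose_linear fps_nth_Abs_fps fps_binomial_nth)
    also have "\<dots> = -2 * (((- (1/2)) gchoose m) * (-4) ^ m) / of_nat (Suc m)"
      using absorb by (simp add: field_simps del: of_nat_Suc)
    also have "\<dots> = fps_nth (1 - 2 * fps_X * catalan_fps) (Suc m)"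
      by (simp add: catalan_fps_def gbinomial_minus_half_times_power numeral_fps_const mult.assoc)
    finally show ?thesis
      using Suc by simp
  qed (simp add: fps_compose_linear)
qed

lemma one_minus_two_X_catalan_fps_squared:
  "(1 - 2 * fps_X * catalan_fps)^2 = (1 - 4 * fps_X :: 'a::field_char_0 fps)"
proof -
  have "(1 - 2 * fps_X * catalan_fps)^2
      = (fps_binomial (1/2 :: 'a) oo (fps_const (-4) * fps_X))^2"
    by (simp only: one_minus_two_X_catalan_fps_eq_binomial)
  also have "\<dots> = (fps_binomial (1/2))^2 oo (fps_const (-4) * fps_X)"
    by (simp add: fps_compose_power)
  also have "(fps_binomial (1/2 :: 'a))^2 = 1 + fps_X"
    by (simp add: fps_binomial_power fps_binomial_1)
  also have "(1 + fps_X) oo (fps_const (-4) * fps_X) = (1 - 4 * fps_X :: 'a fps)"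
    by (simp add: fps_compose_add_distrib fps_eq_iff numeral_fps_const)
  finally show ?thesis .
qed

lemma catalan_fps_functional_eq:
  "(catalan_fps :: 'a::field_char_0 fps) = 1 + fps_X * catalan_fps^2"
proof -
  let ?c = "catalan_fps :: 'a fps"
  have "4 * fps_X * (1 + fps_X * ?c^2 - ?c) = (1 - 2 * fps_X * ?c)^2 - (1 - 4 * fps_X)"
    by (simp add: power2_eq_square algebra_simps)
  also have "\<dots> = 0"
    by (simp add: one_minus_two_X_catalan_fps_squared)
  finally show ?thesis
    by simp
qed

lemma riordan_apply_catalan_fps_quadratic:
  fixes N D T :: "'a::field_char_0 fps"
  assumes "fps_nth D 0 \<noteq> 0" and "fps_nth T 0 = 0"
  defines "F \<equiv> riordan_apply (N / D) (T * N / D^2) catalan_fps"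
  shows "F * D = N + T * F^2"
proof -
  define f where "f = T * N / D^2"
  define C where "C = catalan_fps oo f"
  have D_inverse: "D * inverse D = 1"
    using assms(1) by (rule inverse_mult_eq_1')
  have f_inverse: "f = T * N * (inverse D)^2"
    using assms(1) by (simp add: f_def fps_divide_unit fps_inverse_power)
  have f0: "fps_nth f 0 = 0"
    using assms(2) by (simp add: f_inverse)
  have "C = (1 + fps_X * catalan_fps^2) oo f"
    unfolding C_def by (subst catalan_fps_functional_eq) (rule refl)
  also have "\<dots> = 1 + f * C^2"
    by (simp add: C_def fps_compose_add_distrib fps_compose_mult_distrib[OF f0]
        fps_compose_power[OF f0] f0)
  finally have C_eq: "C = 1 + f * C^2" .
  have F_eq: "F = N * inverse D * C"
    using assms(1) by (simp add: F_def riordan_apply_def C_def f_def fps_divide_unit)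
  have "F * D = N * C"
    by (simp add: F_eq D_inverse algebra_simps)
  also have "\<dots> = N + N * f * C^2"
    by (subst C_eq) (simp add: algebra_simps)
  also have "\<dots> = N + T * F^2"
    by (simp add: f_inverse F_eq algebra_simps power2_eq_square)
  finally show ?thesis .
qed

lemma fps_quadratic_solution_unique:
  fixes A B D N T :: "'a::idom fps"
  assumes "A * D = N + T * A^2" and "B * D = N + T * B^2"
    and "fps_nth D 0 \<noteq> 0" and "fps_nth T 0 = 0"
  shows "A = B"
proof -
  have "(A - B) * (D - T * (A + B)) = (A * D - T * A^2) - (B * D - T * B^2)"
    by (simp add: algebra_simps power2_eq_square)
  also have "\<dots> = 0"
    using assms(1,2) by simp
  finally have "(A - B) * (D - T * (A + B)) = 0" .
  moreover have "D - T * (A + B) \<noteq> 0"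
  proof
    assume "D - T * (A + B) = 0"
    then have "fps_nth (D - T * (A + B)) 0 = 0" by simp
    with assms(3,4) show False by simp
  qed
  ultimately show ?thesis
    by simp
qed

lemma fps_square_nth_Suc:
  "fps_nth (Abs_fps a ^ 2) (Suc m) = 2 * a 0 * a (Suc m) + (\<Sum>k=1..m. a k * a (Suc m - k))"
  for a :: "nat \<Rightarrow> 'a::comm_ring_1"
proof -
  have "fps_nth (Abs_fps a ^ 2) (Suc m) = (\<Sum>k=0..Suc m. a k * a (Suc m - k))"
    by (simp add: power2_eq_square fps_mult_nth)
  also have "\<dots> = a 0 * a (Suc m) + (\<Sum>k=1..m. a k * a (Suc m - k)) + a (Suc m) * a 0"
    by (simp add: sum.atLeast_Suc_atMost)
  finally show ?thesis
    by (simp add: algebra_simps)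
qed

lemma fps_quadratic_of_recurrence:
  fixes p q r s t :: "'a::comm_ring_1" and a :: "nat \<Rightarrow> 'a"
  assumes "a 0 = 1" and "a 1 = p" and "a 2 = q"
    and rec: "\<And>n. n \<ge> 3 \<Longrightarrow>
           a n = r * a (n-1) + s * a (n-2) + t * (\<Sum>k=1..n-3. a k * a (n-k-2))"
  shows "Abs_fps a * (1 - fps_const r * fps_X - fps_const (s - 2*t) * fps_X^2)
     = (1 - fps_const (r-p) * fps_X - fps_const (-q+p*r+s-t) * fps_X^2)
       + fps_const t * fps_X^2 * Abs_fps a ^ 2"
proof -
  let ?A = "Abs_fps a"
  have "?A * (1 - fps_const r * fps_X - fps_const (s - 2*t) * fps_X^2)
      = ?A - fps_const r * (fps_X * ?A) - fps_const (s - 2*t) * (fps_X^2 * ?A)"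
    by (simp add: algebra_simps)
  moreover have "(1 - fps_const (r-p) * fps_X - fps_const (-q+p*r+s-t) * fps_X^2)
       + fps_const t * fps_X^2 * ?A^2
      = 1 - fps_const (r-p) * fps_X - fps_const (-q+p*r+s-t) * fps_X^2
       + fps_const t * (fps_X^2 * ?A^2)"
    by (simp add: algebra_simps)
  moreover have "fps_nth (?A - fps_const r * (fps_X * ?A) - fps_const (s - 2*t) * (fps_X^2 * ?A)) n
    = fps_nth (1 - fps_const (r-p) * fps_X - fps_const (-q+p*r+s-t) * fps_X^2
       + fps_const t * (fps_X^2 * ?A^2)) n" for n
  proof -
    consider "n = 0" | "n = 1" | "n = 2" | m where "n = m + 3"
    proof (cases "n < 3")
      case True
      then show ?thesis using that by (auto simp: less_Suc_eq numeral_3_eq_3)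
    qed (use that(4)[of "n - 3"] in simp)
    then show ?thesis
    proof cases
      case (4 m)
      have "(\<Sum>k=1..n-3. a k * a (n-k-2)) = (\<Sum>k=1..m. a k * a (Suc m - k))"
        using 4 by (intro sum.cong) auto
      then have "a (m+3) = r * a (m+2) + s * a (m+1) + t * (\<Sum>k=1..m. a k * a (Suc m - k))"
        using rec[of n] 4 by simp
      moreover have "fps_nth (?A - fps_const r * (fps_X * ?A) - fps_const (s - 2*t) * (fps_X^2 * ?A)) n
          = a (m+3) - r * a (m+2) - (s - 2*t) * a (m+1)"
        using 4 by (simp add: fps_X_power_mult_nth numeral_3_eq_3)
      moreover have "fps_nth (1 - fps_const (r-p) * fps_X - fps_const (-q+p*r+s-t) * fps_X^2
          + fps_const t * (fps_X^2 * ?A^2)) n = t * (2 * a (Suc m) + (\<Sum>k=1..m. a k * a (Suc m - k)))"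
        using 4 assms(1) by (simp add: fps_X_power_mult_nth fps_square_nth_Suc numeral_3_eq_3)
      ultimately show ?thesis
        by (simp add: algebra_simps)
    qed (use assms(1-3) in \<open>simp_all add: fps_X_power_mult_nth fps_power_zeroth\<close>)
  qed
  ultimately show ?thesis
    by (simp add: fps_eq_iff)
qed

theorem mainTheorem6:
  fixes p q r s t :: "'a::field_char_0" and a :: "nat \<Rightarrow> 'a"
  assumes "a 0 = 1" and "a 1 = p" and "a 2 = q"
    and "\<And>n. n \<ge> 3 \<Longrightarrow>
           a n = r * a (n-1) + s * a (n-2) + t * (\<Sum>k=1..n-3. a k * a (n-k-2))"
  shows "Abs_fps a =
    riordan_apply
      ((1 - fps_const (r-p) * fps_X - fps_const (-q+p*r+s-t) * fps_X^2)
        / (1 - fps_const r * fps_X - fps_const (s - 2*t) * fps_X^2))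
      (fps_const t * fps_X^2 * (1 - fps_const (r-p) * fps_X - fps_const (-q+p*r+s-t) * fps_X^2)
        / (1 - fps_const r * fps_X - fps_const (s - 2*t) * fps_X^2)^2)
      catalan_fps"
    (is "_ = riordan_apply (?N / ?D) (?T * ?N / ?D^2) catalan_fps")
proof (rule fps_quadratic_solution_unique)
  show "Abs_fps a * ?D = ?N + ?T * Abs_fps a ^ 2"
    using fps_quadratic_of_recurrence[OF assms] .
  show "fps_nth ?D 0 \<noteq> 0" and "fps_nth ?T 0 = 0"
    by simp_all
  then show "riordan_apply (?N / ?D) (?T * ?N / ?D^2) catalan_fps * ?D
      = ?N + ?T * (riordan_apply (?N / ?D) (?T * ?N / ?D^2) catalan_fps)^2"
    by (rule riordan_apply_catalan_fps_quadratic)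
qed

end
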